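(* In the local-alternative setting—$(\xi_n)$ stationary Gaussian with mean $0$, variance $1$, $\gamma(k)\sim k^{-D}L(k)$, $D\in(0,1)$; $Y_n=G(\xi_n)$ with continuous strictly monotone distribution function $F$ and density $f$; $r$ the Hermite rank of $\{1_{\{G(\xi_1)\le x\}}-F(x)\}$, $Dr<1$; $0<\tau<1$, $c>0$, $h_n=cn^{-1}d_{n,r}$, $X_{n,i}=Y_i$ ($i\le\lfloor n\tau\rfloor$), $X_{n,i}=Y_i+h_n$ ($i>\lfloor n\tau\rfloor$); and under all hypotheses listed here: $\lambda\in(0,1/3)$, $\vartheta>0$ with $\sup_{t,x}d_{n,r}^{-1}(\min\{x,1-x\})^{-\lambda}|\sum_{j\le nt}(1_{\{F(Y_j)\le x\}}-x)-\frac{1}{r!}J_r(F^-(x))\sum_{j\le nt}H_r(\xi_j)|=\mathcal{O}_P(n^{-\vartheta})$; $0<\rho<\min\{1,(1-2\lambda-\vartheta)^{-1}\vartheta\}$ with $\sup_x(\min\{x,1-x\})^{-2\lambda}|u^{-1}(x-F(F^-(x)-u))-f(F^-(x))|=\mathcal{O}(u^\rho)$; $\sup_x(\min\{x,1-x\})^{-2\lambda}f(F^-(x))<\infty$; $n^{\lambda+\rho-1}=\mathcal{O}(d_{n,r}^{\rho-1})$; $2\lambda+\vartheta<1/2$; constants $C,\epsilon_1>0$ with $|1-f(F^-(x)+u)/f(F^-(x))|\le C(\min\{x,1-x\})^{-\epsilon_1}|u|$ for small $|u|$; $n^\lambda=o(d_{n,r}^{1-\lambda})$, $n^\lambda d_{n,r}^{1+\epsilon_1}=o(n)$,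 $d_{n,r}^{\rho+\lambda}=o(n^\rho)$—we have $$\sup_{x\in[0,1]}|\tilde F_n^-(x)-x|=\mathcal{O}_P(h_n)\quad\text{and}\quad\sup_{x\in[0,1]}(\min\{x,1-x\})^{-\lambda}|\tilde F_n^-(x)-x|=\mathcal{O}_P(n^\lambda h_n).$$
   Context: $H_q$ Hermite polynomials; $J_q(y)=\mathbb{E}[1_{\{G(\xi_1)\le y\}}H_q(\xi_1)]$; $r=\min_y\min\{q\ge1:J_q(y)\ne0\}$; $d_{n,r}^2=\operatorname{Var}(\sum_{i=1}^nH_r(\xi_i))$; $F^-$ generalized inverse. With $Y_{(n)}=\max_{i\le n}Y_i$, $H_n(x)=F(x)$ for $x<Y_{(n)}-h_n$, $H_n(x)=F(x-h_n)$ for $x>Y_{(n)}+h_n$, linear in between; $Y_{n,i}=H_n(X_{n,i})$, with order statistics $Y_{n,(1)}\le\dots\le Y_{n,(n)}$. $\tilde F_n^-:[0,1]\to[0,1]$ is defined by $\tilde F_n^-(0)=0$, $\tilde F_n^-(i/(n+1))=Y_{n,(i)}$ for $i=1,\dots,n$, $\tilde F_n^-(1)=1$, and linear interpolation in between. *)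

theory Defs
  imports "HOL-Probability.Probability" "HOL-Library.Landau_Symbols"
begin

fun hermite :: "nat \<Rightarrow> real \<Rightarrow> real" where
  "hermite 0 x = 1"
| "hermite (Suc 0) x = x"
| "hermite (Suc (Suc q)) x = x * hermite (Suc q) x - real (Suc q) * hermite q x"

definition normal_rv :: "'a measure \<Rightarrow> ('a \<Rightarrow> real) \<Rightarrow> bool" where
  "normal_rv M X \<longleftrightarrow> X \<in> borel_measurable M \<and>
     (\<exists>\<mu>. (AE \<omega> in M. X \<omega> = \<mu>) \<or>
          (\<exists>\<sigma>>0. distributed M lborel X (\<lambda>x. ennreal (normal_density \<mu> \<sigma> x))))"

definition gaussian_process :: "'a measure \<Rightarrow> (nat \<Rightarrow> 'a \<Rightarrow> real) \<Rightarrow> bool" where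
  "gaussian_process M \<xi> \<longleftrightarrow>
     (\<forall>I a. finite I \<and> I \<subseteq> {1..} \<longrightarrow> normal_rv M (\<lambda>\<omega>. \<Sum>i\<in>I. a i * \<xi> i \<omega>))"

definition stationary_process :: "'a measure \<Rightarrow> (nat \<Rightarrow> 'a \<Rightarrow> real) \<Rightarrow> bool" where
  "stationary_process M \<xi> \<longleftrightarrow>
     (\<forall>I k. finite I \<and> I \<subseteq> {1..} \<longrightarrow>
        distr M (PiM I (\<lambda>_. borel)) (\<lambda>\<omega>. restrict (\<lambda>i. \<xi> (i + k) \<omega>) I) =
        distr M (PiM I (\<lambda>_. borel)) (\<lambda>\<omega>. restrict (\<lambda>i. \<xi> i \<omega>) I))"

definition slowly_varying :: "(real \<Rightarrow> real) \<Rightarrow> bool" where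
  "slowly_varying L \<longleftrightarrow> L \<in> borel_measurable borel \<and> (\<forall>\<^sub>F x in at_top. L x > 0) \<and>
     (\<forall>a>0. ((\<lambda>x. L (a * x) / L x) \<longlongrightarrow> 1) at_top)"

definition Jcoef :: "'a measure \<Rightarrow> (real \<Rightarrow> real) \<Rightarrow> ('a \<Rightarrow> real) \<Rightarrow> nat \<Rightarrow> real \<Rightarrow> real" where
  "Jcoef M G \<xi>1 q y = (\<integral>\<omega>. (if G (\<xi>1 \<omega>) \<le> y then 1 else 0) * hermite q (\<xi>1 \<omega>) \<partial>M)"

definition hermite_rank :: "'a measure \<Rightarrow> (real \<Rightarrow> real) \<Rightarrow> ('a \<Rightarrow> real) \<Rightarrow> nat" where
  "hermite_rank M G \<xi>1 = (LEAST q. 1 \<le> q \<and> (\<exists>y. Jcoef M G \<xi>1 q y \<noteq> 0))"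

definition dnr :: "'a measure \<Rightarrow> (nat \<Rightarrow> 'a \<Rightarrow> real) \<Rightarrow> nat \<Rightarrow> nat \<Rightarrow> real" where
  "dnr M \<xi> r n = sqrt (prob_space.variance M (\<lambda>\<omega>. \<Sum>i=1..n. hermite r (\<xi> i \<omega>)))"

definition gen_inv :: "(real \<Rightarrow> real) \<Rightarrow> real \<Rightarrow> real" where
  "gen_inv F x = Inf {t. x \<le> F t}"

definition Hn :: "(real \<Rightarrow> real) \<Rightarrow> real \<Rightarrow> real \<Rightarrow> real \<Rightarrow> real" where
  "Hn F Ymax h x =
     (if x < Ymax - h then F x
      else if x > Ymax + h then F (x - h)
      else F (Ymax - h) + (x - (Ymax - h)) / (2 * h) * (F Ymax - F (Ymax - h)))"

definition Xni :: "(nat \<Rightarrow> real) \<Rightarrow> real \<Rightarrow> real \<Rightarrow> nat \<Rightarrow> nat \<Rightarrow> real" where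
  "Xni Y h \<tau> n i = (if int i \<le> \<lfloor>real n * \<tau>\<rfloor> then Y i else Y i + h)"

definition Yni :: "(real \<Rightarrow> real) \<Rightarrow> (nat \<Rightarrow> real) \<Rightarrow> real \<Rightarrow> real \<Rightarrow> nat \<Rightarrow> nat \<Rightarrow> real" where
  "Yni F Y h \<tau> n i = Hn F (Max (Y ` {1..n})) h (Xni Y h \<tau> n i)"

definition order_stat :: "(nat \<Rightarrow> real) \<Rightarrow> nat \<Rightarrow> nat \<Rightarrow> real" where
  "order_stat v n i = sort (map v [1..<n+1]) ! (i - 1)"

text \<open>Piecewise linear interpolation on [0,1] through (0,0), (i/(n+1), w i) for i=1..n, (1,1).\<close>
definition interp_quantile :: "nat \<Rightarrow> (nat \<Rightarrow> real) \<Rightarrow> real \<Rightarrow> real" where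
  "interp_quantile n w x =
     (let v = (\<lambda>k::nat. if k = 0 then 0 else if k \<le> n then w k else 1);
          k = nat \<lfloor>x * real (n + 1)\<rfloor>
      in if 1 \<le> x then 1 else v k + (x * real (n + 1) - real k) * (v (k + 1) - v k))"

definition Ftilde_inv :: "(real \<Rightarrow> real) \<Rightarrow> (nat \<Rightarrow> real) \<Rightarrow> real \<Rightarrow> real \<Rightarrow> nat \<Rightarrow> real \<Rightarrow> real" where
  "Ftilde_inv F Y h \<tau> n = interp_quantile n (order_stat (Yni F Y h \<tau> n) n)"

text \<open>Z_n is extended-real valued so that
  suprema can be written literally.\<close>
definition bigOP :: "'a measure \<Rightarrow> (nat \<Rightarrow> 'a \<Rightarrow> ereal) \<Rightarrow> (nat \<Rightarrow> real) \<Rightarrow> bool" where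
  "bigOP M Z a \<longleftrightarrow> (\<forall>\<epsilon>>0. \<exists>K N. \<forall>n\<ge>N. \<exists>A\<in>sets M.
      {\<omega>\<in>space M. Z n \<omega> > ereal (K * a n)} \<subseteq> A \<and> measure M A \<le> \<epsilon>)"

end

theory Submission
  imports Defs
begin

text \<open>Write \<open>U\<^sub>j = F(Y\<^sub>j)\<close>. Since the density \<open>f\<close> is bounded (by H3), \<open>F\<close> is Lipschitz and the
  transformed observation \<open>Y\<^sub>n\<^sub>,\<^sub>j = H\<^sub>n(X\<^sub>n\<^sub>,\<^sub>j)\<close> lies within \<open>O(h\<^sub>n)\<close> of \<open>U\<^sub>j\<close>. The reduction
  principle H1 together with Chebyshev's inequality for \<open>\<Sum>\<^sub>j\<^sub>\<le>\<^sub>n H\<^sub>r(\<xi>\<^sub>j)\<close>, whose variance is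
  \<open>d\<^sub>n\<^sub>,\<^sub>r\<^sup>2\<close> with \<open>d\<^sub>n\<^sub>,\<^sub>r \<ge> 1\<close> eventually (by H7), shows that \<open>#{j \<le> n. U\<^sub>j \<le> x} - n x = O\<^sub>P(d\<^sub>n\<^sub>,\<^sub>r)\<close>
  uniformly in \<open>x\<close>, and \<open>d\<^sub>n\<^sub>,\<^sub>r / n\<close> is a multiple of \<open>h\<^sub>n\<close>. Counting then places the order statistic
  \<open>Y\<^sub>n\<^sub>,\<^sub>(\<^sub>k\<^sub>)\<close> within \<open>O\<^sub>P(h\<^sub>n)\<close> of \<open>k/(n+1)\<close>, uniformly in \<open>k\<close>, and the piecewise linear
  interpolation inherits this bound. Its deviation from the identity vanishes at the end nodes \<open>0\<close> and
  \<open>1\<close>, so it is also at most \<open>(n+1) min{x, 1-x}\<close> times the node bound; this gives the weighted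
  estimate with the factor \<open>n\<^sup>\<lambda>\<close>.\<close>

lemma borel_measurable_hermite [measurable]: "hermite q \<in> borel_measurable borel"
proof -
  have "isCont (hermite q) x" for x
    by (induction q x rule: hermite.induct) (auto intro!: continuous_intros)
  then show ?thesis
    by (intro borel_measurable_continuous_onI continuous_at_imp_continuous_on) auto
qed

lemma integrable_std_normal_power_hermite:
  "integrable lborel (\<lambda>x. std_normal_density x * (x ^ k * hermite q x))"
proof (induction q arbitrary: k rule: induct_nat_012)
  case 0
  show ?case using integrable_std_normal_moment[of k] by simp
next
  case 1
  show ?case using integrable_std_normal_moment[of "Suc k"] by (simp add: mult_ac)
next
  case (ge2 q)
  have "integrable lborel (\<lambda>x. std_normal_density x * (x ^ Suc k * hermite (Suc q) x)
          - real (Suc q) * (std_normal_density x * (x ^ k * hermite q x)))"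
    using ge2 by (intro Bochner_Integration.integrable_diff integrable_mult_right)
  then show ?case by (simp add: algebra_simps del: of_nat_Suc)
qed

definition hermite_moment :: "nat \<Rightarrow> nat \<Rightarrow> real" where
  "hermite_moment q k = (\<integral>x. std_normal_density x * (x ^ k * hermite q x) \<partial>lborel)"

lemma hermite_moment_0_Suc_Suc: "hermite_moment 0 (Suc (Suc k)) = real (Suc k) * hermite_moment 0 k"
proof (cases "even k")
  case True
  then obtain j where k: "k = 2 * j" by (auto elim: evenE)
  have "fact (2 * Suc j) = real (2 * j + 2) * real (2 * j + 1) * (fact (2 * j) :: real)"
    by (simp add: fact_Suc algebra_simps)
  moreover have "(2 :: real) ^ Suc j * fact (Suc j) = real (2 * j + 2) * (2 ^ j * fact j)"
    by (simp add: algebra_simps)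
  ultimately have "fact (2 * Suc j) / (2 ^ Suc j * fact (Suc j)) =
      real (2 * j + 1) * (fact (2 * j) / (2 ^ j * fact j) :: real)"
    by (simp add: field_simps del: of_nat_add of_nat_mult of_nat_Suc fact_Suc power_Suc)
  then show ?thesis
    using integral_std_normal_moment_even[of j] integral_std_normal_moment_even[of "Suc j"]
    by (simp add: hermite_moment_def k)
next
  case False
  then obtain j where k: "k = 2 * j + 1" using oddE by blast
  then show ?thesis
    using integral_std_normal_moment_odd[of j] integral_std_normal_moment_odd[of "Suc j"]
    by (simp add: hermite_moment_def)
qed

lemma hermite_moment_1: "hermite_moment (Suc 0) k = hermite_moment 0 (Suc k)"
  by (simp add: hermite_moment_def mult_ac)

lemma hermite_moment_Suc_Suc:
  "hermite_moment (Suc (Suc q)) k = hermite_moment (Suc q) (Suc k) - real (Suc q) * hermite_moment q k"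
proof -
  have "hermite_moment (Suc (Suc q)) k = (\<integral>x. std_normal_density x * (x ^ Suc k * hermite (Suc q) x)
          - real (Suc q) * (std_normal_density x * (x ^ k * hermite q x)) \<partial>lborel)"
    unfolding hermite_moment_def by (rule Bochner_Integration.integral_cong) (simp_all add: algebra_simps)
  also have "\<dots> = hermite_moment (Suc q) (Suc k) - real (Suc q) * hermite_moment q k"
    unfolding hermite_moment_def
    by (subst Bochner_Integration.integral_diff[OF integrable_std_normal_power_hermite
          integrable_mult_right[OF integrable_std_normal_power_hermite]])
       (simp only: integral_mult_right_zero)
  finally show ?thesis .
qed

lemma hermite_moment_Suc_Suc_eq:
  assumes "\<And>k. hermite_moment (Suc q) k = real k * hermite_moment q (k - 1)"
  shows "hermite_moment (Suc (Suc q)) k = (real k - real q) * hermite_moment q k"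
  using hermite_moment_Suc_Suc[of q k] assms[of "Suc k"] by (simp add: algebra_simps)

text \<open>Stein's identity \<open>E[\<xi> g(\<xi>)] = E[g'(\<xi>)]\<close> for \<open>g(x) = x\<^sup>k H\<^sub>q(x)\<close>, using \<open>H\<^sub>q\<^sub>+\<^sub>1 = x H\<^sub>q - H\<^sub>q'\<close>.\<close>
lemma hermite_moment_Suc: "hermite_moment (Suc q) k = real k * hermite_moment q (k - 1)"
proof (induction q arbitrary: k rule: induct_nat_012)
  case 0
  show ?case
  proof (cases k)
    case 0
    then show ?thesis
      using integral_std_normal_moment_odd[of 0] by (simp add: hermite_moment_1 hermite_moment_def)
  next
    case (Suc j)
    then show ?thesis by (simp add: hermite_moment_1 hermite_moment_0_Suc_Suc)
  qed
next
  case 1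
  show ?case
    using hermite_moment_Suc_Suc[of 0 k] hermite_moment_0_Suc_Suc[of k]
    by (cases k) (simp_all add: hermite_moment_1 algebra_simps)
next
  case (ge2 q)
  have "hermite_moment (Suc (Suc (Suc q))) k = (real k - real (Suc q)) * (real k * hermite_moment q (k - 1))"
    using hermite_moment_Suc_Suc_eq[OF ge2(2), of k] ge2(1)[of k] by simp
  also have "\<dots> = real k * hermite_moment (Suc (Suc q)) (k - 1)"
    by (cases k) (simp_all add: hermite_moment_Suc_Suc_eq[OF ge2(1)] algebra_simps)
  finally show ?case .
qed

lemma integral_std_normal_hermite:
  "1 \<le> q \<Longrightarrow> (\<integral>x. std_normal_density x * hermite q x \<partial>lborel) = 0"
  using hermite_moment_Suc[of "q - 1" 0] by (cases q) (simp_all add: hermite_moment_def)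

context prob_space
begin

lemma normal_rv_std_normal:
  assumes "normal_rv M X" and "expectation X = 0" and "expectation (\<lambda>\<omega>. (X \<omega>)\<^sup>2) = 1"
  shows "distributed M lborel X std_normal_density"
proof -
  obtain \<mu> where cases: "(AE \<omega> in M. X \<omega> = \<mu>) \<or>
      (\<exists>\<sigma>>0. distributed M lborel X (\<lambda>x. ennreal (normal_density \<mu> \<sigma> x)))"
    using assms(1) unfolding normal_rv_def by blast
  have X: "X \<in> borel_measurable M" using assms(1) unfolding normal_rv_def by blast
  show ?thesis
  proof (cases "AE \<omega> in M. X \<omega> = \<mu>")
    case True
    have "expectation X = expectation (\<lambda>_. \<mu>)"
      using True X by (intro integral_cong_AE) auto
    moreover have "expectation (\<lambda>\<omega>. (X \<omega>)\<^sup>2) = expectation (\<lambda>_. \<mu>\<^sup>2)"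
      using True X by (intro integral_cong_AE) auto
    ultimately show ?thesis using assms(2,3) by (simp add: prob_space)
  next
    case False
    then obtain \<sigma> where \<sigma>: "0 < \<sigma>" and D: "distributed M lborel X (\<lambda>x. ennreal (normal_density \<mu> \<sigma> x))"
      using cases by blast
    have "\<mu> = 0" using normal_distributed_expectation[OF \<sigma> D] assms(2) by simp
    moreover have "\<sigma>\<^sup>2 = 1" using normal_distributed_variance[OF \<sigma> D] assms(2,3) by simp
    then have "\<sigma> = 1" using \<sigma> by (simp add: power2_eq_1_iff)
    ultimately show ?thesis using D by simp
  qed
qed

lemma gaussian_process_normal_rv:
  assumes "gaussian_process M \<xi>" and "1 \<le> i"
  shows "normal_rv M (\<xi> i)"
  using assms(1)[unfolded gaussian_process_def, rule_format, of "{i}" "\<lambda>_. 1"] assms(2) by simp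

lemma stationary_process_distr_eq:
  assumes [measurable]: "\<And>i. \<xi> i \<in> borel_measurable M"
    and "stationary_process M \<xi>" and "1 \<le> j"
  shows "distr M borel (\<xi> j) = distr M borel (\<xi> 1)"
proof -
  let ?P = "PiM {1::nat} (\<lambda>_. borel :: real measure)"
  have shift: "distr M ?P (\<lambda>\<omega>. restrict (\<lambda>i. \<xi> (i + (j - 1)) \<omega>) {1}) =
      distr M ?P (\<lambda>\<omega>. restrict (\<lambda>i. \<xi> i \<omega>) {1})"
    using assms(2)[unfolded stationary_process_def, rule_format, of "{1}" "j - 1"] by simp
  have "distr M borel (\<xi> (1 + (j - 1))) = distr M borel (\<xi> 1)"
  proof -
    have "distr M borel (\<xi> (k + 1)) =
        distr (distr M ?P (\<lambda>\<omega>. restrict (\<lambda>i. \<xi> (i + k) \<omega>) {1})) borel (\<lambda>g. g 1)" for k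
      by (subst distr_distr) (auto simp: comp_def)
    from this[of "j - 1"] this[of 0] show ?thesis
      unfolding shift by (simp add: add.commute)
  qed
  then show ?thesis using assms(3) by simp
qed

lemma stationary_gaussian_std_normal:
  assumes meas: "\<And>i. \<xi> i \<in> borel_measurable M"
    and "gaussian_process M \<xi>" "stationary_process M \<xi>"
    and "expectation (\<xi> 1) = 0" "expectation (\<lambda>\<omega>. (\<xi> 1 \<omega>)\<^sup>2) = 1"
    and "1 \<le> j"
  shows "distributed M lborel (\<xi> j) std_normal_density"
proof -
  have "distributed M lborel (\<xi> 1) std_normal_density"
    by (rule normal_rv_std_normal[OF gaussian_process_normal_rv[OF assms(2)]]) (use assms(4,5) in auto)
  moreover have "distr M lborel (\<xi> j) = distr M lborel (\<xi> 1)"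
  proof -
    have "distr M lborel (\<xi> j) = distr M borel (\<xi> j)" by (rule distr_cong) auto
    also have "\<dots> = distr M borel (\<xi> 1)" by (rule stationary_process_distr_eq[OF meas assms(3,6)])
    also have "\<dots> = distr M lborel (\<xi> 1)" by (rule distr_cong) auto
    finally show ?thesis .
  qed
  ultimately show ?thesis
    using meas[of j] unfolding distributed_def by simp
qed

lemma
  assumes "distributed M lborel X std_normal_density"
  shows integrable_hermite_std_normal: "integrable M (\<lambda>\<omega>. hermite q (X \<omega>))"
    and expectation_hermite_std_normal: "1 \<le> q \<Longrightarrow> expectation (\<lambda>\<omega>. hermite q (X \<omega>)) = 0"
proof -
  show "integrable M (\<lambda>\<omega>. hermite q (X \<omega>))"
    using distributed_integrable[OF assms, of "hermite q"]
      integrable_std_normal_power_hermite[of 0 q] by simp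
  show "expectation (\<lambda>\<omega>. hermite q (X \<omega>)) = 0" if "1 \<le> q"
    using distributed_integral[OF assms, of "hermite q"] integral_std_normal_hermite[OF that] by simp
qed

end

lemma one_le_powr_nonpos:
  fixes m p :: real
  assumes "0 < m" "m \<le> 1" "p \<le> 0"
  shows "1 \<le> m powr p"
  using powr_mono2'[OF assms(3) assms(1,2)] by simp

lemma (in prob_space) cdf_strict_mono_bounds:
  fixes F :: "real \<Rightarrow> real"
  assumes "\<And>x. F x = prob {\<omega>\<in>space M. X \<omega> \<le> x}" and "strict_mono F"
  shows "0 < F t \<and> F t < 1"
proof -
  have "F (t - 1) < F t" "F t < F (t + 1)" using assms(2) by (auto intro: strict_monoD)
  moreover have "0 \<le> F (t - 1)" "F (t + 1) \<le> 1" using assms(1) by auto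
  ultimately show ?thesis by auto
qed

lemma gen_inv_strict_mono:
  fixes F :: "real \<Rightarrow> real"
  assumes "strict_mono F"
  shows "gen_inv F (F t) = t"
proof -
  have "{s. F t \<le> F s} = {t..}" using assms by (auto simp: strict_mono_less_eq)
  then show ?thesis unfolding gen_inv_def by simp
qed

lemma bounded_of_weighted_bounded:
  fixes F f :: "real \<Rightarrow> real"
  assumes "bdd_above ((\<lambda>x. (min x (1 - x)) powr p * f (gen_inv F x)) ` {0<..<1})"
    and "p \<le> 0" and "strict_mono F" and "\<And>t. 0 < F t \<and> F t < 1" and "\<And>t. 0 \<le> f t"
  shows "\<exists>B\<ge>0. \<forall>t. f t \<le> B"
proof -
  obtain B where B: "\<forall>x\<in>{0<..<1}. (min x (1 - x)) powr p * f (gen_inv F x) \<le> B"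
    using assms(1) unfolding bdd_above_def by (elim exE) (rule that, simp)
  have "f t \<le> B" for t
  proof -
    have "1 \<le> (min (F t) (1 - F t)) powr p"
      using assms(4)[of t] by (intro one_le_powr_nonpos assms(2)) auto
    then have "f t \<le> (min (F t) (1 - F t)) powr p * f t"
      using mult_right_mono[OF _ assms(5)[of t]] by fastforce
    also have "\<dots> \<le> B"
      using B[rule_format, of "F t"] assms(4) by (simp add: gen_inv_strict_mono[OF assms(3)])
    finally show ?thesis .
  qed
  moreover from this have "0 \<le> B" using assms(5) order_trans by blast
  ultimately show ?thesis by blast
qed

lemma (in prob_space) cdf_Lipschitz_of_density_bound:
  assumes F: "\<And>x. F x = prob {\<omega>\<in>space M. X \<omega> \<le> x}"
    and dens: "distributed M lborel X (\<lambda>x. ennreal (f x))"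
    and fB: "\<And>t. f t \<le> B" and "0 \<le> B" and "a \<le> b"
  shows "F b - F a \<le> B * (b - a)"
proof -
  have [measurable]: "X \<in> borel_measurable M" using distributed_measurable[OF dens] by simp
  define S where "S = X -` {a<..b} \<inter> space M"
  have split: "{\<omega>\<in>space M. X \<omega> \<le> b} = {\<omega>\<in>space M. X \<omega> \<le> a} \<union> S"
    unfolding S_def using \<open>a \<le> b\<close> by auto
  have Fb: "F b = F a + prob S"
    unfolding F split by (rule finite_measure_Union) (auto simp: S_def)
  have "emeasure M S = (\<integral>\<^sup>+x. ennreal (f x) * indicator {a<..b} x \<partial>lborel)"
    unfolding S_def by (rule distributed_emeasure[OF dens]) simp
  also have "\<dots> \<le> (\<integral>\<^sup>+x. ennreal B * indicator {a<..b} x \<partial>lborel)"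
    by (intro nn_integral_mono) (simp add: fB ennreal_leI split: split_indicator)
  also have "\<dots> = ennreal B * emeasure lborel {a<..b}"
    by (rule nn_integral_cmult_indicator) simp
  also have "\<dots> = ennreal (B * (b - a))"
    using \<open>a \<le> b\<close> \<open>0 \<le> B\<close> by (simp add: ennreal_mult)
  finally have "prob S \<le> B * (b - a)"
    using \<open>a \<le> b\<close> \<open>0 \<le> B\<close> by (simp add: emeasure_eq_measure ennreal_le_iff)
  then show ?thesis using Fb by simp
qed

text \<open>Away from the sample maximum \<open>Hn\<close> is \<open>F\<close> or its shift by \<open>h\<close>; near it, \<open>Hn\<close> interpolates
  within \<open>[F (m - h), F m]\<close>, an interval that also contains \<open>F y\<close> and has length \<open>O(h)\<close>.\<close>
lemma Hn_perturbation:
  fixes F :: "real \<Rightarrow> real"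
  assumes mono: "mono F" and F01: "\<And>x. 0 \<le> F x \<and> F x \<le> 1"
    and lip: "\<And>a b. a \<le> b \<Longrightarrow> F b - F a \<le> B * (b - a)" and "0 \<le> B"
    and "0 < h" and "y \<le> m" and "y \<le> x" and "x \<le> y + h"
  shows "\<bar>Hn F m h x - F y\<bar> \<le> 2 * B * h \<and> 0 \<le> Hn F m h x \<and> Hn F m h x \<le> 1"
proof (cases "x < m - h")
  case True
  have "F x - F y \<le> B * h"
    using lip[OF \<open>y \<le> x\<close>] mult_left_mono[OF _ \<open>0 \<le> B\<close>, of "x - y" h] \<open>x \<le> y + h\<close> by simp
  moreover have "F y \<le> F x" using monoD[OF mono \<open>y \<le> x\<close>] .
  ultimately show ?thesis
    using True F01[of x] \<open>0 \<le> B\<close> \<open>0 < h\<close> by (simp add: Hn_def)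
next
  case False
  define t where "t = (x - (m - h)) / (2 * h)"
  have t: "0 \<le> t" "t \<le> 1" using False assms(5-8) by (auto simp: t_def field_simps)
  have Hn: "Hn F m h x = F (m - h) + t * (F m - F (m - h))"
    using False assms(5-8) by (simp add: Hn_def t_def)
  have Fm: "F (m - 2 * h) \<le> F (m - h)" "F (m - h) \<le> F m" "F (m - 2 * h) \<le> F y" "F y \<le> F m"
    using False assms(5-8) by (auto intro!: monoD[OF mono])
  have "0 \<le> t * (F m - F (m - h))" "t * (F m - F (m - h)) \<le> F m - F (m - h)"
    using t Fm by (simp_all add: mult_left_le_one_le)
  then have "F (m - h) \<le> Hn F m h x" "Hn F m h x \<le> F m" by (simp_all add: Hn)
  moreover have "F m - F (m - 2 * h) \<le> 2 * B * h" using lip[of "m - 2 * h" m] \<open>0 < h\<close> by simp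
  ultimately show ?thesis
    unfolding abs_le_iff using Fm F01[of "m - h"] F01[of m] by (intro conjI) linarith+
qed

lemma card_filter_map_upt:
  "card {j\<in>{1..n}. P (V j)} = length (filter P (map V [1..<n + 1]))"
proof (induction n)
  case (Suc n)
  have "{j\<in>{1..Suc n}. P (V j)} = {j\<in>{1..n}. P (V j)} \<union> (if P (V (Suc n)) then {Suc n} else {})"
    by (auto simp: le_Suc_eq)
  then show ?case using Suc by (auto simp: card_insert_if)
qed simp

lemma
  fixes s :: "real list"
  assumes "sorted s" and "i < length s"
  shows sorted_count_le_nth: "i + 1 \<le> length (filter (\<lambda>v. v \<le> s ! i) s)"
    and sorted_count_less_nth: "length (filter (\<lambda>v. v < s ! i) s) \<le> i"
proof -
  have "{0..i} \<subseteq> {j. j < length s \<and> s ! j \<le> s ! i}"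
    using assms by (auto intro: sorted_nth_mono)
  from card_mono[OF _ this] show "i + 1 \<le> length (filter (\<lambda>v. v \<le> s ! i) s)"
    by (simp add: length_filter_conv_card)
  have "{j. j < length s \<and> s ! j < s ! i} \<subseteq> {0..<i}"
    using assms by (auto simp: not_less[symmetric] dest: sorted_nth_mono)
  from card_mono[OF _ this] show "length (filter (\<lambda>v. v < s ! i) s) \<le> i"
    by (simp add: length_filter_conv_card)
qed

lemma
  fixes V :: "nat \<Rightarrow> real"
  assumes "1 \<le> k" and "k \<le> n"
  shows card_le_order_stat: "k \<le> card {j\<in>{1..n}. V j \<le> order_stat V n k}"
    and card_less_order_stat: "card {j\<in>{1..n}. V j < order_stat V n k} < k"
    and order_stat_mem: "order_stat V n k \<in> V ` {1..n}"
proof -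
  define s where "s = sort (map V [1..<n + 1])"
  have os: "order_stat V n k = s ! (k - 1)" unfolding order_stat_def s_def by simp
  have s: "sorted s" "k - 1 < length s" using assms by (simp_all add: s_def)
  have count: "card {j\<in>{1..n}. P (V j)} = length (filter P s)" for P
    unfolding card_filter_map_upt s_def by (metis mset_filter mset_sort size_mset)
  show "k \<le> card {j\<in>{1..n}. V j \<le> order_stat V n k}"
    using sorted_count_le_nth[OF s] count[of "\<lambda>v. v \<le> s ! (k - 1)"] assms(1) unfolding os by simp
  show "card {j\<in>{1..n}. V j < order_stat V n k} < k"
    using sorted_count_less_nth[OF s] count[of "\<lambda>v. v < s ! (k - 1)"] assms(1) unfolding os by simp
  have "s ! (k - 1) \<in> set s" using s(2) by simp
  then show "order_stat V n k \<in> V ` {1..n}"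
    unfolding os s_def by (simp add: atLeastLessThanSuc_atLeastAtMost del: upt_Suc)
qed

lemma count_deviation_everywhere:
  fixes U :: "nat \<Rightarrow> real"
  assumes U01: "\<And>j. j \<in> {1..n} \<Longrightarrow> 0 < U j \<and> U j < 1"
    and dev: "\<And>x. x \<in> {0<..<1} \<Longrightarrow> \<bar>real (card {j\<in>{1..n}. U j \<le> x}) - real n * x\<bar> \<le> E"
    and "0 \<le> E"
  shows "\<bar>real (card {j\<in>{1..n}. U j \<le> y}) - real n * max 0 (min y 1)\<bar> \<le> E"
proof -
  consider "y \<le> 0" | "1 \<le> y" | "y \<in> {0<..<1}" by fastforce
  then show ?thesis
  proof cases
    case 1
    then have none: "{j\<in>{1..n}. U j \<le> y} = {}" using U01 by force
    show ?thesis unfolding none using 1 \<open>0 \<le> E\<close> by simp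
  next
    case 2
    then have all: "{j\<in>{1..n}. U j \<le> y} = {1..n}" using U01 by force
    show ?thesis unfolding all using 2 \<open>0 \<le> E\<close> by simp
  qed (use dev in auto)
qed

text \<open>Each \<open>V j\<close> lies within \<open>e\<close> of \<open>U j\<close>, so the rank \<open>k\<close> of \<open>V\<^sub>(\<^sub>k\<^sub>)\<close> is squeezed between the
  counts of the \<open>U j\<close> below \<open>V\<^sub>(\<^sub>k\<^sub>) \<plusminus> e\<close>.\<close>
lemma order_stat_rank_lower:
  fixes U V :: "nat \<Rightarrow> real"
  assumes U01: "\<And>j. j \<in> {1..n} \<Longrightarrow> 0 < U j \<and> U j < 1"
    and dev: "\<And>x. x \<in> {0<..<1} \<Longrightarrow> \<bar>real (card {j\<in>{1..n}. U j \<le> x}) - real n * x\<bar> \<le> E"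
    and "0 \<le> E"
    and close: "\<And>j. j \<in> {1..n} \<Longrightarrow> \<bar>V j - U j\<bar> \<le> e"
    and k: "1 \<le> k" "k \<le> n"
  shows "real k \<le> real n * (order_stat V n k + e) + E"
proof -
  define u where "u = order_stat V n k"
  obtain j0 where "j0 \<in> {1..n}" "u = V j0"
    using order_stat_mem[OF k, of V] unfolding u_def by auto
  then have "0 \<le> u + e" using close U01 by fastforce
  have "card {j\<in>{1..n}. V j \<le> u} \<le> card {j\<in>{1..n}. U j \<le> u + e}"
    using close by (intro card_mono) force+
  then have "real k \<le> real (card {j\<in>{1..n}. U j \<le> u + e})"
    using card_le_order_stat[OF k, of V] unfolding u_def by linarith
  moreover have "real n * max 0 (min (u + e) 1) \<le> real n * (u + e)"
    using \<open>0 \<le> u + e\<close> by (intro mult_left_mono) auto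
  ultimately show ?thesis
    using count_deviation_everywhere[OF U01 dev \<open>0 \<le> E\<close>, of "u + e"] unfolding u_def by linarith
qed

text \<open>The shift by \<open>1/n\<close> turns the strict count below \<open>V\<^sub>(\<^sub>k\<^sub>)\<close> into a non-strict one.\<close>
lemma order_stat_rank_upper:
  fixes U V :: "nat \<Rightarrow> real"
  assumes U01: "\<And>j. j \<in> {1..n} \<Longrightarrow> 0 < U j \<and> U j < 1"
    and dev: "\<And>x. x \<in> {0<..<1} \<Longrightarrow> \<bar>real (card {j\<in>{1..n}. U j \<le> x}) - real n * x\<bar> \<le> E"
    and "0 \<le> E"
    and close: "\<And>j. j \<in> {1..n} \<Longrightarrow> \<bar>V j - U j\<bar> \<le> e"
    and k: "1 \<le> k" "k \<le> n"
  shows "real n * order_stat V n k \<le> real k + real n * e + E"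
proof -
  define u where "u = order_stat V n k"
  define y where "y = u - e - 1 / real n"
  have "0 < 1 / real n" using k by simp
  obtain j0 where j0: "j0 \<in> {1..n}" "u = V j0"
    using order_stat_mem[OF k, of V] unfolding u_def by auto
  then have "u \<le> U j0 + e" "U j0 < 1" using close[OF j0(1)] U01[OF j0(1)] by auto
  then have "y < 1" using \<open>0 < 1 / real n\<close> unfolding y_def by linarith
  have "card {j\<in>{1..n}. U j \<le> y} \<le> card {j\<in>{1..n}. V j < u}"
  proof (intro card_mono subsetI)
    fix j assume j: "j \<in> {j\<in>{1..n}. U j \<le> y}"
    then have "V j \<le> U j + e" "U j \<le> y" using close[of j] by auto
    then have "V j < u" using \<open>0 < 1 / real n\<close> unfolding y_def by linarith
    then show "j \<in> {j\<in>{1..n}. V j < u}" using j by simp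
  qed simp
  then have "real (card {j\<in>{1..n}. U j \<le> y}) \<le> real k - 1"
    using card_less_order_stat[OF k, of V] unfolding u_def by linarith
  moreover have "real n * y \<le> real n * max 0 (min y 1)"
    using \<open>y < 1\<close> by (intro mult_left_mono) auto
  moreover have "real n * y = real n * u - real n * e - 1"
    using k unfolding y_def by (simp add: algebra_simps)
  ultimately show ?thesis
    using count_deviation_everywhere[OF U01 dev \<open>0 \<le> E\<close>, of y] unfolding u_def by linarith
qed

lemma order_stat_deviation:
  fixes U V :: "nat \<Rightarrow> real"
  assumes "\<And>j. j \<in> {1..n} \<Longrightarrow> 0 < U j \<and> U j < 1"
    and "\<And>x. x \<in> {0<..<1} \<Longrightarrow> \<bar>real (card {j\<in>{1..n}. U j \<le> x}) - real n * x\<bar> \<le> E"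
    and "0 \<le> E"
    and "\<And>j. j \<in> {1..n} \<Longrightarrow> \<bar>V j - U j\<bar> \<le> e"
    and k: "1 \<le> k" "k \<le> n"
  shows "\<bar>order_stat V n k - real k / real (n + 1)\<bar> \<le> e + (E + 1) / real n"
proof -
  have n: "0 < real n" using k by simp
  have "\<bar>order_stat V n k - real k / real n\<bar> \<le> e + E / real n"
    using order_stat_rank_lower[OF assms] order_stat_rank_upper[OF assms] n
    by (simp add: field_simps abs_le_iff del: of_nat_Suc)
  moreover have "\<bar>real k / real n - real k / real (n + 1)\<bar> \<le> 1 / real n"
  proof -
    have eq: "real k / real n - real k / real (n + 1) = real k / real n / real (n + 1)"
      using n by (simp add: field_simps)
    have "real k / real n \<le> 1" using k n by simp
    then have "real k / real n / real (n + 1) \<le> 1 / real (n + 1)" by (rule divide_right_mono) simp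
    also have "\<dots> \<le> 1 / real n" using n by (simp add: frac_le)
    finally show ?thesis unfolding eq by simp
  qed
  ultimately show ?thesis by (simp add: add_divide_distrib)
qed

lemma powr_neg_mult_min_le:
  fixes m N lam :: real
  assumes "0 \<le> m" and "1 \<le> N" and "0 \<le> lam" and "lam \<le> 1"
  shows "m powr (- lam) * min 1 (N * m) \<le> N powr lam"
proof (cases "m = 0")
  case False
  then have m: "0 < m" using assms(1) by simp
  show ?thesis
  proof (cases "1 / N \<le> m")
    case True
    have "m powr (- lam) \<le> (1 / N) powr (- lam)"
      using True assms by (intro powr_mono2') auto
    also have "\<dots> = N powr lam"
      using assms(2) by (simp add: powr_divide powr_minus_divide)
    finally have "m powr (- lam) * min 1 (N * m) \<le> N powr lam * 1"
      by (intro mult_mono) (use m assms(2) in auto)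
    then show ?thesis by simp
  next
    case False
    have "m powr (- lam) * min 1 (N * m) \<le> N * (m powr (- lam) * m powr 1)"
      using m by (simp add: mult_left_mono mult.left_commute)
    also have "\<dots> = N * m powr (1 - lam)"
      unfolding powr_add[symmetric] by simp
    also have "\<dots> \<le> N * (1 / N) powr (1 - lam)"
      using False m assms by (intro mult_left_mono powr_mono2) auto
    also have "\<dots> = N powr 1 * N powr (lam - 1)"
      using assms(2) by (simp add: powr_divide powr_minus_divide[symmetric])
    also have "\<dots> = N powr lam"
      unfolding powr_add[symmetric] by simp
    finally show ?thesis .
  qed
qed simp

definition interp_node :: "nat \<Rightarrow> (nat \<Rightarrow> real) \<Rightarrow> nat \<Rightarrow> real" where
  "interp_node n w k = (if k = 0 then 0 else if k \<le> n then w k else 1)"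

lemma interp_quantile_segment:
  fixes w :: "nat \<Rightarrow> real" and n :: nat and x :: real
  assumes "0 \<le> x" and "x < 1"
    and k_def: "k = nat \<lfloor>x * real (n + 1)\<rfloor>" and s_def: "s = x * real (n + 1) - real k"
  shows "k \<le> n" and "0 \<le> s" and "s < 1"
    and "interp_quantile n w x - x = (1 - s) * (interp_node n w k - real k / real (n + 1))
           + s * (interp_node n w (k + 1) - real (k + 1) / real (n + 1))"
proof -
  have k: "real k = of_int \<lfloor>x * real (n + 1)\<rfloor>" using assms(1) by (simp add: k_def)
  show s: "0 \<le> s" "s < 1" unfolding s_def k by linarith+
  have "real k \<le> x * real (n + 1)" using s by (simp add: s_def)
  also have "\<dots> < real (n + 1)" using assms(2) by simp
  finally show "k \<le> n" by simp
  have iq: "interp_quantile n w x = interp_node n w k + s * (interp_node n w (k + 1) - interp_node n w k)"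
    using assms(2) unfolding interp_quantile_def interp_node_def Let_def k_def s_def by simp
  have x: "x = (real k + s) / real (n + 1)" by (simp add: s_def)
  have "interp_quantile n w x - x
      = interp_node n w k + s * (interp_node n w (k + 1) - interp_node n w k) - (real k + s) / real (n + 1)"
    unfolding iq by (subst x) (rule refl)
  also have "\<dots> = (1 - s) * (interp_node n w k - real k / real (n + 1))
      + s * (interp_node n w (k + 1) - real (k + 1) / real (n + 1))"
    by (simp add: divide_inverse algebra_simps)
  finally show "interp_quantile n w x - x = (1 - s) * (interp_node n w k - real k / real (n + 1))
      + s * (interp_node n w (k + 1) - real (k + 1) / real (n + 1))" .
qed

text \<open>The deviation at \<open>x\<close> is a convex combination of the deviations at the neighbouring nodes, and
  it vanishes at the end nodes \<open>0\<close> and \<open>n + 1\<close>; this gives the linear decay near \<open>0\<close> and \<open>1\<close>.\<close>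
lemma interp_quantile_deviation:
  fixes w :: "nat \<Rightarrow> real"
  assumes "0 \<le> e" and w: "\<And>k. k \<in> {1..n} \<Longrightarrow> \<bar>w k - real k / real (n + 1)\<bar> \<le> e"
    and x: "x \<in> {0..1}"
  shows "\<bar>interp_quantile n w x - x\<bar> \<le> e * min 1 (real (n + 1) * min x (1 - x))"
proof (cases "x = 1")
  case False
  define N where "N = real (n + 1)"
  define dev where "dev k = interp_node n w k - real k / N" for k
  define k where "k = nat \<lfloor>x * N\<rfloor>"
  define s where "s = x * N - real k"
  note seg = interp_quantile_segment[OF _ _ k_def[unfolded N_def] s_def[unfolded N_def]]
  have s: "0 \<le> s" "s < 1" and "k \<le> n" using seg(1-3) x False by auto
  have eq: "interp_quantile n w x - x = (1 - s) * dev k + s * dev (k + 1)"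
    using seg(4)[of w] x False by (simp add: dev_def N_def)
  have dev: "\<bar>dev j\<bar> \<le> e" if "j \<le> n + 1" for j
    using w[of j] that \<open>0 \<le> e\<close> by (auto simp: dev_def interp_node_def N_def le_Suc_eq)
  have bd: "\<bar>interp_quantile n w x - x\<bar> \<le> (1 - s) * \<bar>dev k\<bar> + s * \<bar>dev (k + 1)\<bar>"
    unfolding eq using s by (intro order_trans[OF abs_triangle_ineq]) (simp add: abs_mult)
  have "(1 - s) * \<bar>dev k\<bar> + s * \<bar>dev (k + 1)\<bar> \<le> (1 - s) * e + s * e"
    using dev[of k] dev[of "k + 1"] \<open>k \<le> n\<close> s by (intro add_mono mult_left_mono) auto
  then have "\<bar>interp_quantile n w x - x\<bar> \<le> e"
    using bd by (simp add: algebra_simps)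
  moreover have "\<bar>interp_quantile n w x - x\<bar> \<le> e * (N * x)"
  proof (cases "k = 0")
    case True
    then show ?thesis
      using bd dev[of 1] s mult_left_mono[of "\<bar>dev 1\<bar>" e s]
      by (simp add: dev_def interp_node_def s_def mult.commute)
  next
    case False
    then have "1 \<le> N * x" using x by (simp add: k_def mult.commute)
    from mult_left_mono[OF this \<open>0 \<le> e\<close>] show ?thesis
      using \<open>\<bar>interp_quantile n w x - x\<bar> \<le> e\<close> by simp
  qed
  moreover have "\<bar>interp_quantile n w x - x\<bar> \<le> e * (N * (1 - x))"
  proof (cases "k = n")
    case True
    then have "1 - s = N * (1 - x)" by (simp add: s_def N_def algebra_simps)
    then show ?thesis
      using bd dev[of n] s True mult_left_mono[of "\<bar>dev n\<bar>" e "1 - s"]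
      by (simp add: dev_def interp_node_def N_def mult.commute)
  next
    case False
    then have "1 \<le> N * (1 - x)" using \<open>k \<le> n\<close> s by (simp add: s_def N_def algebra_simps)
    from mult_left_mono[OF this \<open>0 \<le> e\<close>] show ?thesis
      using \<open>\<bar>interp_quantile n w x - x\<bar> \<le> e\<close> by simp
  qed
  moreover have "e * min 1 (N * min x (1 - x)) = min e (min (e * (N * x)) (e * (N * (1 - x))))"
    using \<open>0 \<le> e\<close> by (simp add: N_def min_mult_distrib_left)
  ultimately show ?thesis unfolding N_def by simp
qed (simp add: interp_quantile_def)

lemma interp_quantile_weighted_deviation:
  fixes w :: "nat \<Rightarrow> real"
  assumes "0 \<le> e" and "\<And>k. k \<in> {1..n} \<Longrightarrow> \<bar>w k - real k / real (n + 1)\<bar> \<le> e"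
    and x: "x \<in> {0..1}" and "0 \<le> lam" "lam \<le> 1"
  shows "(min x (1 - x)) powr (- lam) * \<bar>interp_quantile n w x - x\<bar> \<le> real (n + 1) powr lam * e"
proof -
  have "(min x (1 - x)) powr (- lam) * \<bar>interp_quantile n w x - x\<bar>
      \<le> (min x (1 - x)) powr (- lam) * (e * min 1 (real (n + 1) * min x (1 - x)))"
    by (intro mult_left_mono interp_quantile_deviation assms) (simp_all add: powr_ge_zero)
  also have "\<dots> \<le> real (n + 1) powr lam * e"
    using mult_left_mono[OF powr_neg_mult_min_le[of "min x (1 - x)" "real (n + 1)" lam] assms(1)]
      x assms(4,5) by (simp add: mult_ac)
  finally show ?thesis .
qed

lemma Ftilde_inv_deviation:
  fixes F :: "real \<Rightarrow> real" and Y :: "nat \<Rightarrow> real"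
  assumes mono: "mono F" and F01: "\<And>t. 0 < F t \<and> F t < 1"
    and lip: "\<And>a b. a \<le> b \<Longrightarrow> F b - F a \<le> B * (b - a)" and "0 \<le> B"
    and "0 < h" and "1 \<le> n" and "0 \<le> E"
    and dev: "\<And>x. x \<in> {0<..<1} \<Longrightarrow> \<bar>real (card {j\<in>{1..n}. F (Y j) \<le> x}) - real n * x\<bar> \<le> E"
    and x: "x \<in> {0..1}" and "0 \<le> lam" "lam \<le> 1"
  shows "\<bar>Ftilde_inv F Y h \<tau> n x - x\<bar> \<le> 2 * B * h + (E + 1) / real n"
    and "(min x (1 - x)) powr (- lam) * \<bar>Ftilde_inv F Y h \<tau> n x - x\<bar>
           \<le> real (n + 1) powr lam * (2 * B * h + (E + 1) / real n)"
proof -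
  define V where "V = Yni F Y h \<tau> n"
  have F01': "0 \<le> F t \<and> F t \<le> 1" for t using F01[of t] by simp
  have close: "\<bar>V j - F (Y j)\<bar> \<le> 2 * B * h" if j: "j \<in> {1..n}" for j
  proof -
    have "Y j \<le> Max (Y ` {1..n})" using j by (intro Max_ge) auto
    moreover have "Y j \<le> Xni Y h \<tau> n j" "Xni Y h \<tau> n j \<le> Y j + h"
      using \<open>0 < h\<close> by (simp_all add: Xni_def)
    ultimately show ?thesis
      using Hn_perturbation[OF mono F01' lip \<open>0 \<le> B\<close> \<open>0 < h\<close>] by (simp add: V_def Yni_def)
  qed
  have w: "\<bar>order_stat V n k - real k / real (n + 1)\<bar> \<le> 2 * B * h + (E + 1) / real n"
    if "k \<in> {1..n}" for k
    using order_stat_deviation[where U = "\<lambda>j. F (Y j)", OF _ dev \<open>0 \<le> E\<close> close] F01 that by auto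
  have e: "0 \<le> 2 * B * h + (E + 1) / real n" using \<open>0 \<le> B\<close> \<open>0 < h\<close> \<open>0 \<le> E\<close> by simp
  note interp = interp_quantile_deviation[OF e w x] interp_quantile_weighted_deviation[OF e w x]
  show "\<bar>Ftilde_inv F Y h \<tau> n x - x\<bar> \<le> 2 * B * h + (E + 1) / real n"
    using order_trans[OF interp(1) mult_left_le[OF min.cobounded1 e]]
    unfolding Ftilde_inv_def V_def[symmetric] .
  show "(min x (1 - x)) powr (- lam) * \<bar>Ftilde_inv F Y h \<tau> n x - x\<bar>
           \<le> real (n + 1) powr lam * (2 * B * h + (E + 1) / real n)"
    using interp(2)[OF _ \<open>0 \<le> lam\<close> \<open>lam \<le> 1\<close>] unfolding Ftilde_inv_def V_def[symmetric] by simp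
qed

text \<open>The supremum over \<open>(t, x)\<close> in hypothesis H1, with \<open>U j = F(Y\<^sub>j)\<close>, \<open>J x = J\<^sub>r(F\<^sup>-(x)) / r!\<close> and
  \<open>Z j = H\<^sub>r(\<xi>\<^sub>j)\<close>.\<close>
definition uniform_reduction_error ::
    "real \<Rightarrow> real \<Rightarrow> nat \<Rightarrow> (nat \<Rightarrow> real) \<Rightarrow> (real \<Rightarrow> real) \<Rightarrow> (nat \<Rightarrow> real) \<Rightarrow> ereal" where
  "uniform_reduction_error lam d n U J Z = (SUP p\<in>{0..1} \<times> {0<..<1}. ereal
      (1 / d * (min (snd p) (1 - snd p)) powr (- lam) *
       \<bar>(\<Sum>j\<in>{1..nat \<lfloor>real n * fst p\<rfloor>}. (if U j \<le> snd p then 1 else 0) - snd p)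
        - J (snd p) * (\<Sum>j\<in>{1..nat \<lfloor>real n * fst p\<rfloor>}. Z j)\<bar>))"

lemma count_deviation_of_reduction_error:
  assumes err: "uniform_reduction_error lam d n U J Z \<le> ereal \<eta>"
    and "0 < d" and "0 \<le> lam" and y: "y \<in> {0<..<1}"
  shows "\<bar>real (card {j\<in>{1..n}. U j \<le> y}) - real n * y - J y * (\<Sum>j=1..n. Z j)\<bar> \<le> d * \<eta>"
proof -
  define A where "A = real (card {j\<in>{1..n}. U j \<le> y}) - real n * y - J y * (\<Sum>j=1..n. Z j)"
  define w where "w = (min y (1 - y)) powr (- lam)"
  have count: "(\<Sum>j\<in>{1..n}. (if U j \<le> y then 1 else 0) - y) = real (card {j\<in>{1..n}. U j \<le> y}) - real n * y"
    by (simp add: sum_subtractf sum.If_cases Int_def conj_commute)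
  have "(1::real, y) \<in> {0..1} \<times> {0<..<1}" using y by simp
  then have "ereal (1 / d * w * \<bar>A\<bar>) \<le> uniform_reduction_error lam d n U J Z"
    unfolding uniform_reduction_error_def A_def w_def count[symmetric] by (rule SUP_upper2) simp
  then have "1 / d * w * \<bar>A\<bar> \<le> \<eta>" using err by (metis ereal_less_eq(3) order_trans)
  then have "w * \<bar>A\<bar> \<le> d * \<eta>" using \<open>0 < d\<close> by (simp add: field_simps)
  moreover have "1 \<le> w" unfolding w_def using y \<open>0 \<le> lam\<close> by (intro one_le_powr_nonpos) auto
  then have "\<bar>A\<bar> \<le> w * \<bar>A\<bar>" using mult_right_mono[of 1 w "\<bar>A\<bar>"] by simp
  ultimately show ?thesis unfolding A_def by linarith
qed

lemma count_deviation_of_reduction_bounds: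
  assumes err: "uniform_reduction_error lam d n U J Z \<le> ereal (K1 * real n powr (- \<theta>))"
    and "0 \<le> lam" and "0 \<le> \<theta>" and "1 \<le> n" and "1 \<le> d"
    and J: "\<And>y. \<bar>J y\<bar> \<le> cJ" and Z: "\<bar>\<Sum>j=1..n. Z j\<bar> \<le> K2 * d"
    and y: "y \<in> {0<..<1}"
  shows "\<bar>real (card {j\<in>{1..n}. U j \<le> y}) - real n * y\<bar> \<le> d * (\<bar>K1\<bar> + cJ * K2)"
proof -
  have "real n powr (- \<theta>) \<le> 1"
    using ge_one_powr_ge_zero[of "real n" \<theta>] \<open>1 \<le> n\<close> \<open>0 \<le> \<theta>\<close> by (simp add: powr_minus_divide)
  then have "K1 * real n powr (- \<theta>) \<le> \<bar>K1\<bar>"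
    using mult_right_mono[of K1 "\<bar>K1\<bar>" "real n powr (- \<theta>)"] mult_left_le[of _ "\<bar>K1\<bar>"] by force
  then have "d * (K1 * real n powr (- \<theta>)) \<le> d * \<bar>K1\<bar>"
    using \<open>1 \<le> d\<close> by (intro mult_left_mono) auto
  moreover have "\<bar>J y * (\<Sum>j=1..n. Z j)\<bar> \<le> cJ * (K2 * d)"
    unfolding abs_mult using J[of y] J[of 0] Z by (intro mult_mono) auto
  moreover note count_deviation_of_reduction_error[OF err _ \<open>0 \<le> lam\<close> y]
  ultimately have "\<bar>real (card {j\<in>{1..n}. U j \<le> y}) - real n * y\<bar> \<le> d * \<bar>K1\<bar> + cJ * (K2 * d)"
    using \<open>1 \<le> d\<close> by (smt (verit))
  then show ?thesis by (simp add: algebra_simps)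
qed

lemma powr_Suc_le_two_mult:
  assumes "1 \<le> n" and "0 \<le> lam" and "lam \<le> 1"
  shows "real (n + 1) powr lam \<le> 2 * real n powr lam"
proof -
  have "real (n + 1) powr lam \<le> (2 * real n) powr lam" using assms by (intro powr_mono2) auto
  also have "\<dots> = 2 powr lam * real n powr lam" by (simp add: powr_mult)
  also have "\<dots> \<le> 2 powr 1 * real n powr lam" using assms by (intro mult_right_mono powr_mono) auto
  finally show ?thesis by simp
qed

lemma Ftilde_inv_deviation_of_reduction:
  fixes F J :: "real \<Rightarrow> real" and Y Z :: "nat \<Rightarrow> real"
  assumes mono: "mono F" and F01: "\<And>t. 0 < F t \<and> F t < 1"
    and lip: "\<And>a b. a \<le> b \<Longrightarrow> F b - F a \<le> B * (b - a)" and "0 \<le> B"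
    and "0 < c" and "0 \<le> lam" "lam \<le> 1" and "0 \<le> \<theta>" and "1 \<le> n" and "1 \<le> d"
    and err: "uniform_reduction_error lam d n (\<lambda>j. F (Y j)) J Z \<le> ereal (K1 * real n powr (- \<theta>))"
    and J: "\<And>y. \<bar>J y\<bar> \<le> cJ" and Z: "\<bar>\<Sum>j=1..n. Z j\<bar> \<le> K2 * d"
    and x: "x \<in> {0..1}"
  defines "K \<equiv> 2 * (2 * B * c + \<bar>K1\<bar> + cJ * K2 + 1) / c"
  shows "\<bar>Ftilde_inv F Y (c / real n * d) \<tau> n x - x\<bar> \<le> K * (c / real n * d)
    \<and> (min x (1 - x)) powr (- lam) * \<bar>Ftilde_inv F Y (c / real n * d) \<tau> n x - x\<bar>
        \<le> K * (real n powr lam * (c / real n * d))"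
proof -
  define h where "h = c / real n * d"
  define E where "E = d * (\<bar>K1\<bar> + cJ * K2)"
  have "0 \<le> cJ" using J[of 0] by simp
  have "0 \<le> K2 * d" using Z by linarith
  then have "0 \<le> K2" using \<open>1 \<le> d\<close> by (simp add: zero_le_mult_iff)
  then have "0 \<le> E" using \<open>1 \<le> d\<close> \<open>0 \<le> cJ\<close> by (simp add: E_def)
  have "0 < h" using \<open>0 < c\<close> \<open>1 \<le> n\<close> \<open>1 \<le> d\<close> by (simp add: h_def)
  have dev: "\<bar>real (card {j\<in>{1..n}. F (Y j) \<le> y}) - real n * y\<bar> \<le> E" if "y \<in> {0<..<1}" for y
    unfolding E_def using assms(6,8-10) J Z that by (rule count_deviation_of_reduction_bounds[OF err])
  note bound = Ftilde_inv_deviation[OF mono F01 lip \<open>0 \<le> B\<close> \<open>0 < h\<close> \<open>1 \<le> n\<close> \<open>0 \<le> E\<close> dev x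
      \<open>0 \<le> lam\<close> \<open>lam \<le> 1\<close>]
  define e where "e = 2 * B * h + (E + 1) / real n"
  have "0 \<le> e" using \<open>0 \<le> B\<close> \<open>0 < h\<close> \<open>0 \<le> E\<close> by (simp add: e_def)
  have "e \<le> K / 2 * h"
  proof -
    have "K / 2 * h = 2 * B * h + (E + d) / real n"
      using \<open>0 < c\<close> \<open>1 \<le> n\<close> by (simp add: K_def h_def E_def field_simps)
    then show ?thesis using \<open>1 \<le> d\<close> by (simp add: e_def divide_right_mono)
  qed
  have "real (n + 1) powr lam * e \<le> (2 * real n powr lam) * (K / 2 * h)"
    using powr_Suc_le_two_mult[OF \<open>1 \<le> n\<close> \<open>0 \<le> lam\<close> \<open>lam \<le> 1\<close>] \<open>e \<le> K / 2 * h\<close> \<open>0 \<le> e\<close>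
    by (intro mult_mono) auto
  also have "\<dots> = K * (real n powr lam * h)" by simp
  finally have "real (n + 1) powr lam * e \<le> K * (real n powr lam * h)" .
  then show ?thesis
    using bound(1)[of \<tau>] order_trans[OF bound(2)[of \<tau>]] \<open>0 \<le> e\<close> \<open>e \<le> K / 2 * h\<close>
    unfolding h_def[symmetric] e_def[symmetric] by auto
qed

context prob_space
begin

lemma bigOP_combine:
  assumes Z1: "bigOP M Z1 a1" and Z2: "bigOP M Z2 a2"
    and bound: "\<And>K1 K2. \<exists>K N. \<forall>n\<ge>N. \<forall>\<omega>\<in>space M. Z1 n \<omega> \<le> ereal (K1 * a1 n) \<longrightarrow>
        Z2 n \<omega> \<le> ereal (K2 * a2 n) \<longrightarrow> Z n \<omega> \<le> ereal (K * a n)"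
  shows "bigOP M Z a"
  unfolding bigOP_def
proof (intro allI impI)
  fix \<epsilon> :: real assume "0 < \<epsilon>"
  obtain K1 N1 where KN1: "\<forall>n\<ge>N1. \<exists>A\<in>sets M. {\<omega>\<in>space M. Z1 n \<omega> > ereal (K1 * a1 n)} \<subseteq> A \<and> prob A \<le> \<epsilon> / 2"
    using Z1 \<open>0 < \<epsilon>\<close> unfolding bigOP_def by (meson half_gt_zero)
  obtain K2 N2 where KN2: "\<forall>n\<ge>N2. \<exists>A\<in>sets M. {\<omega>\<in>space M. Z2 n \<omega> > ereal (K2 * a2 n)} \<subseteq> A \<and> prob A \<le> \<epsilon> / 2"
    using Z2 \<open>0 < \<epsilon>\<close> unfolding bigOP_def by (meson half_gt_zero)
  obtain K N where KN: "\<forall>n\<ge>N. \<forall>\<omega>\<in>space M. Z1 n \<omega> \<le> ereal (K1 * a1 n) \<longrightarrow>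
      Z2 n \<omega> \<le> ereal (K2 * a2 n) \<longrightarrow> Z n \<omega> \<le> ereal (K * a n)"
    using bound by blast
  have "\<exists>A\<in>sets M. {\<omega>\<in>space M. Z n \<omega> > ereal (K * a n)} \<subseteq> A \<and> prob A \<le> \<epsilon>"
    if n: "max N (max N1 N2) \<le> n" for n
  proof -
    obtain A1 where A1: "A1 \<in> sets M" "{\<omega>\<in>space M. Z1 n \<omega> > ereal (K1 * a1 n)} \<subseteq> A1" "prob A1 \<le> \<epsilon> / 2"
      using KN1 n by auto
    obtain A2 where A2: "A2 \<in> sets M" "{\<omega>\<in>space M. Z2 n \<omega> > ereal (K2 * a2 n)} \<subseteq> A2" "prob A2 \<le> \<epsilon> / 2"
      using KN2 n by auto
    have "{\<omega>\<in>space M. Z n \<omega> > ereal (K * a n)} \<subseteq> A1 \<union> A2"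
      using KN n A1(2) A2(2) by (force simp: not_less)
    moreover have "prob (A1 \<union> A2) \<le> \<epsilon>" using measure_Un_le[OF A1(1) A2(1)] A1(3) A2(3) by simp
    ultimately show ?thesis using A1(1) A2(1) by blast
  qed
  then show "\<exists>K N. \<forall>n\<ge>N. \<exists>A\<in>sets M. {\<omega>\<in>space M. Z n \<omega> > ereal (K * a n)} \<subseteq> A \<and> prob A \<le> \<epsilon>"
    by blast
qed

lemma bigOP_SUP_combine:
  assumes "bigOP M Z1 a1" and "bigOP M Z2 a2"
    and bound: "\<And>K1 K2. \<exists>K N. \<forall>n\<ge>N. \<forall>\<omega>\<in>space M. Z1 n \<omega> \<le> ereal (K1 * a1 n) \<longrightarrow>
        Z2 n \<omega> \<le> ereal (K2 * a2 n) \<longrightarrow> (\<forall>x\<in>X. g n \<omega> x \<le> K * a n)"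
  shows "bigOP M (\<lambda>n \<omega>. SUP x\<in>X. ereal (g n \<omega> x)) a"
proof (rule bigOP_combine[OF assms(1,2)])
  fix K1 K2
  from bound[of K1 K2] obtain K N where "\<forall>n\<ge>N. \<forall>\<omega>\<in>space M. Z1 n \<omega> \<le> ereal (K1 * a1 n) \<longrightarrow>
      Z2 n \<omega> \<le> ereal (K2 * a2 n) \<longrightarrow> (\<forall>x\<in>X. g n \<omega> x \<le> K * a n)"
    by blast
  then show "\<exists>K N. \<forall>n\<ge>N. \<forall>\<omega>\<in>space M. Z1 n \<omega> \<le> ereal (K1 * a1 n) \<longrightarrow>
      Z2 n \<omega> \<le> ereal (K2 * a2 n) \<longrightarrow> (SUP x\<in>X. ereal (g n \<omega> x)) \<le> ereal (K * a n)"
    by (intro exI[of _ K] exI[of _ N]) (simp add: SUP_least)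
qed

lemma bigOP_Ftilde_inv_deviation:
  fixes F J :: "real \<Rightarrow> real" and Y Z :: "nat \<Rightarrow> 'a \<Rightarrow> real" and d :: "nat \<Rightarrow> real"
  assumes mono: "mono F" and F01: "\<And>t. 0 < F t \<and> F t < 1"
    and lip: "\<And>a b. a \<le> b \<Longrightarrow> F b - F a \<le> B * (b - a)" and "0 \<le> B"
    and "0 < c" and "0 \<le> lam" "lam \<le> 1" and "0 \<le> \<theta>"
    and J: "\<And>y. \<bar>J y\<bar> \<le> cJ" and d: "eventually (\<lambda>n. 1 \<le> d n) sequentially"
    and OP_err: "bigOP M (\<lambda>n \<omega>. uniform_reduction_error lam (d n) n (\<lambda>j. F (Y j \<omega>)) J (\<lambda>j. Z j \<omega>))
      (\<lambda>n. real n powr - \<theta>)"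
    and OP_sum: "bigOP M (\<lambda>n \<omega>. ereal \<bar>\<Sum>j=1..n. Z j \<omega>\<bar>) d"
  shows "bigOP M (\<lambda>n \<omega>. SUP x\<in>{0..1}. ereal \<bar>Ftilde_inv F (\<lambda>i. Y i \<omega>) (c / real n * d n) \<tau> n x - x\<bar>)
      (\<lambda>n. c / real n * d n)"
    and "bigOP M (\<lambda>n \<omega>. SUP x\<in>{0..1}. ereal ((min x (1 - x)) powr (- lam) *
        \<bar>Ftilde_inv F (\<lambda>i. Y i \<omega>) (c / real n * d n) \<tau> n x - x\<bar>))
      (\<lambda>n. real n powr lam * (c / real n * d n))"
proof -
  obtain N0 where N0: "\<And>n. N0 \<le> n \<Longrightarrow> 1 \<le> d n" using d unfolding eventually_sequentially by blast
  have good: "\<exists>K N. \<forall>n\<ge>N. \<forall>\<omega>\<in>space M.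
      uniform_reduction_error lam (d n) n (\<lambda>j. F (Y j \<omega>)) J (\<lambda>j. Z j \<omega>) \<le> ereal (K1 * real n powr - \<theta>) \<longrightarrow>
      ereal \<bar>\<Sum>j=1..n. Z j \<omega>\<bar> \<le> ereal (K2 * d n) \<longrightarrow>
      (\<forall>x\<in>{0..1}. \<bar>Ftilde_inv F (\<lambda>i. Y i \<omega>) (c / real n * d n) \<tau> n x - x\<bar> \<le> K * (c / real n * d n)
        \<and> (min x (1 - x)) powr (- lam) * \<bar>Ftilde_inv F (\<lambda>i. Y i \<omega>) (c / real n * d n) \<tau> n x - x\<bar>
          \<le> K * (real n powr lam * (c / real n * d n)))" for K1 K2
    using N0 assms(4-8) J
    by (intro exI[of _ "2 * (2 * B * c + \<bar>K1\<bar> + cJ * K2 + 1) / c"] exI[of _ "max N0 1"] allI impI ballI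
        Ftilde_inv_deviation_of_reduction mono F01 lip) auto
  show "bigOP M (\<lambda>n \<omega>. SUP x\<in>{0..1}. ereal \<bar>Ftilde_inv F (\<lambda>i. Y i \<omega>) (c / real n * d n) \<tau> n x - x\<bar>)
      (\<lambda>n. c / real n * d n)"
    by (rule bigOP_SUP_combine[OF OP_err OP_sum]) (use good in blast)
  show "bigOP M (\<lambda>n \<omega>. SUP x\<in>{0..1}. ereal ((min x (1 - x)) powr (- lam) *
        \<bar>Ftilde_inv F (\<lambda>i. Y i \<omega>) (c / real n * d n) \<tau> n x - x\<bar>))
      (\<lambda>n. real n powr lam * (c / real n * d n))"
    by (rule bigOP_SUP_combine[OF OP_err OP_sum]) (use good in blast)
qed

lemma bigOP_abs_of_variance:
  assumes [measurable]: "\<And>n. S n \<in> borel_measurable M"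
    and mean: "\<And>n. expectation (S n) = 0" and var: "\<And>n. variance (S n) = (d n)\<^sup>2"
    and pos: "eventually (\<lambda>n. 0 < d n) sequentially"
  shows "bigOP M (\<lambda>n \<omega>. ereal \<bar>S n \<omega>\<bar>) d"
  unfolding bigOP_def
proof (intro allI impI)
  fix \<epsilon> :: real assume "0 < \<epsilon>"
  define K where "K = 1 / sqrt \<epsilon>"
  have "0 < K" using \<open>0 < \<epsilon>\<close> by (simp add: K_def)
  obtain N where N: "\<And>n. N \<le> n \<Longrightarrow> 0 < d n" using pos unfolding eventually_sequentially by blast
  have "\<exists>A\<in>sets M. {\<omega>\<in>space M. ereal \<bar>S n \<omega>\<bar> > ereal (K * d n)} \<subseteq> A \<and> prob A \<le> \<epsilon>"
    if "N \<le> n" for n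
  proof (intro bexI conjI)
    have d: "0 < d n" using N that .
    \<comment> \<open>A non-integrable square would give variance \<open>0\<close>.\<close>
    have "integrable M (\<lambda>\<omega>. (S n \<omega>)\<^sup>2)"
      using var[of n] mean[of n] d not_integrable_integral_eq by fastforce
    then have "prob {\<omega>\<in>space M. K * d n \<le> \<bar>S n \<omega>\<bar>} \<le> variance (S n) / (K * d n)\<^sup>2"
      using Chebyshev_inequality[of "S n" "K * d n"] mean[of n] \<open>0 < K\<close> d by simp
    also have "\<dots> = \<epsilon>" using var[of n] d \<open>0 < \<epsilon>\<close> by (simp add: K_def power_divide)
    finally show "prob {\<omega>\<in>space M. K * d n \<le> \<bar>S n \<omega>\<bar>} \<le> \<epsilon>" .
  qed auto
  then show "\<exists>K N. \<forall>n\<ge>N. \<exists>A\<in>sets M. {\<omega>\<in>space M. ereal \<bar>S n \<omega>\<bar> > ereal (K * d n)} \<subseteq> A \<and> prob A \<le> \<epsilon>"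
    by blast
qed

lemma bigOP_hermite_partial_sums:
  assumes "\<And>i. \<xi> i \<in> borel_measurable M"
    and "gaussian_process M \<xi>" "stationary_process M \<xi>"
    and "expectation (\<xi> 1) = 0" "expectation (\<lambda>\<omega>. (\<xi> 1 \<omega>)\<^sup>2) = 1"
    and "1 \<le> r" and "eventually (\<lambda>n. 0 < dnr M \<xi> r n) sequentially"
  shows "bigOP M (\<lambda>n \<omega>. ereal \<bar>\<Sum>j=1..n. hermite r (\<xi> j \<omega>)\<bar>) (dnr M \<xi> r)"
proof (rule bigOP_abs_of_variance)
  have std: "distributed M lborel (\<xi> j) std_normal_density" if "1 \<le> j" for j
    using stationary_gaussian_std_normal[OF assms(1-5) that] .
  show "(\<lambda>\<omega>. \<Sum>j=1..n. hermite r (\<xi> j \<omega>)) \<in> borel_measurable M" for n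
    using assms(1) by measurable
  have "integrable M (\<lambda>\<omega>. hermite r (\<xi> j \<omega>))" "expectation (\<lambda>\<omega>. hermite r (\<xi> j \<omega>)) = 0"
    if "1 \<le> j" for j
    using integrable_hermite_std_normal[OF std[OF that]] expectation_hermite_std_normal[OF std[OF that] assms(6)]
    by auto
  then show "expectation (\<lambda>\<omega>. \<Sum>j=1..n. hermite r (\<xi> j \<omega>)) = 0" for n
    by (subst Bochner_Integration.integral_sum) auto
  show "variance (\<lambda>\<omega>. \<Sum>j=1..n. hermite r (\<xi> j \<omega>)) = (dnr M \<xi> r n)\<^sup>2" for n
    unfolding dnr_def by (simp add: Bochner_Integration.integral_nonneg)
qed (use assms(7) in simp)

lemma abs_Jcoef_le:
  assumes "integrable M (\<lambda>\<omega>. hermite q (X \<omega>))" and "(\<lambda>\<omega>. G (X \<omega>)) \<in> borel_measurable M"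
  shows "\<bar>Jcoef M G X q y\<bar> \<le> expectation (\<lambda>\<omega>. \<bar>hermite q (X \<omega>)\<bar>)"
proof -
  have "integrable M (\<lambda>\<omega>. (if G (X \<omega>) \<le> y then 1 else 0) * hermite q (X \<omega>))"
    using assms by (intro Bochner_Integration.integrable_bound[OF integrable_abs[OF assms(1)]]) auto
  then show ?thesis
    unfolding Jcoef_def
    by (intro order_trans[OF integral_abs_bound] Bochner_Integration.integral_mono integrable_abs assms(1))
       auto
qed

end

lemma eventually_one_le_of_smallo_powr:
  fixes g :: "nat \<Rightarrow> real"
  assumes "(\<lambda>n. real n powr a) \<in> o(\<lambda>n. g n powr b)" and "0 < a" "0 < b" and "\<And>n. 0 \<le> g n"
  shows "eventually (\<lambda>n. 1 \<le> g n) sequentially"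
  using landau_o.smallD[OF assms(1) zero_less_one] eventually_ge_at_top[of "1::nat"]
proof eventually_elim
  case (elim n)
  show ?case
  proof (rule ccontr)
    assume "\<not> 1 \<le> g n"
    then have "g n powr b < 1 powr b" using assms(3,4) by (intro powr_less_mono2) auto
    moreover have "1 \<le> real n powr a" using elim(2) assms(2) by (intro ge_one_powr_ge_zero) auto
    ultimately show False using elim(1) by simp
  qed
qed

theorem lemma1:
  fixes M :: "'a measure" and \<xi> :: "nat \<Rightarrow> 'a \<Rightarrow> real"
    and G F f :: "real \<Rightarrow> real" and L :: "real \<Rightarrow> real"
    and D \<tau> c lam \<theta> \<rho> C \<epsilon>1 \<delta> :: real
  assumes M: "prob_space M"
    and meas: "\<And>i. \<xi> i \<in> borel_measurable M"
    and gauss: "gaussian_process M \<xi>"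
    and stat: "stationary_process M \<xi>"
    and mean0: "(\<integral>\<omega>. \<xi> 1 \<omega> \<partial>M) = 0"
    and var1: "(\<integral>\<omega>. (\<xi> 1 \<omega>)\<^sup>2 \<partial>M) = 1"
    and D: "0 < D" "D < 1"
    and L: "slowly_varying L"
    and lrd: "(\<lambda>k::nat. \<integral>\<omega>. \<xi> 1 \<omega> * \<xi> (1 + k) \<omega> \<partial>M) \<sim>[at_top] (\<lambda>k. real k powr (- D) * L (real k))"
    and G: "G \<in> borel_measurable borel"
    and F_def: "\<And>x. F x = measure M {\<omega>\<in>space M. G (\<xi> 1 \<omega>) \<le> x}"
    and F_cont: "continuous_on UNIV F"
    and F_mono: "strict_mono F"
    and f_nonneg: "\<And>x. 0 \<le> f x"
    and f_dens: "distributed M lborel (\<lambda>\<omega>. G (\<xi> 1 \<omega>)) (\<lambda>x. ennreal (f x))"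
    and rank_ex: "\<exists>q\<ge>1. \<exists>y. Jcoef M G (\<xi> 1) q y \<noteq> 0"
    and Dr: "D * real (hermite_rank M G (\<xi> 1)) < 1"
    and tau: "0 < \<tau>" "\<tau> < 1"
    and c: "0 < c"
    and lam: "0 < lam" "lam < 1/3"
    and theta: "0 < \<theta>"
    and H1: "bigOP M
       (\<lambda>n \<omega>. SUP p\<in>{0..1} \<times> {0<..<1}. ereal
          (1 / dnr M \<xi> (hermite_rank M G (\<xi> 1)) n * (min (snd p) (1 - snd p)) powr (- lam) *
           \<bar>(\<Sum>j\<in>{1..nat \<lfloor>real n * fst p\<rfloor>}. (if F (G (\<xi> j \<omega>)) \<le> snd p then 1 else 0) - snd p)
            - 1 / fact (hermite_rank M G (\<xi> 1)) * Jcoef M G (\<xi> 1) (hermite_rank M G (\<xi> 1)) (gen_inv F (snd p))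
              * (\<Sum>j\<in>{1..nat \<lfloor>real n * fst p\<rfloor>}. hermite (hermite_rank M G (\<xi> 1)) (\<xi> j \<omega>))\<bar>))
       (\<lambda>n. real n powr (- \<theta>))"
    and rho: "0 < \<rho>" "\<rho> < min 1 (\<theta> / (1 - 2 * lam - \<theta>))"
    and H2: "\<exists>K. \<forall>\<^sub>F u in at_right 0. \<forall>x\<in>{0<..<1}.
       (min x (1 - x)) powr (- 2 * lam) * \<bar>(x - F (gen_inv F x - u)) / u - f (gen_inv F x)\<bar> \<le> K * u powr \<rho>"
    and H3: "bdd_above ((\<lambda>x. (min x (1 - x)) powr (- 2 * lam) * f (gen_inv F x)) ` {0<..<1})"
    and H4: "(\<lambda>n. real n powr (lam + \<rho> - 1)) \<in> O(\<lambda>n. dnr M \<xi> (hermite_rank M G (\<xi> 1)) n powr (\<rho> - 1))"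
    and H5: "2 * lam + \<theta> < 1/2"
    and H6: "0 < C" "0 < \<epsilon>1" "0 < \<delta>"
       "\<And>x u. x \<in> {0<..<1} \<Longrightarrow> \<bar>u\<bar> < \<delta> \<Longrightarrow>
          \<bar>1 - f (gen_inv F x + u) / f (gen_inv F x)\<bar> \<le> C * (min x (1 - x)) powr (- \<epsilon>1) * \<bar>u\<bar>"
    and H7: "(\<lambda>n. real n powr lam) \<in> o(\<lambda>n. dnr M \<xi> (hermite_rank M G (\<xi> 1)) n powr (1 - lam))"
    and H8: "(\<lambda>n. real n powr lam * dnr M \<xi> (hermite_rank M G (\<xi> 1)) n powr (1 + \<epsilon>1)) \<in> o(\<lambda>n. real n)"
    and H9: "(\<lambda>n. dnr M \<xi> (hermite_rank M G (\<xi> 1)) n powr (\<rho> + lam)) \<in> o(\<lambda>n. real n powr \<rho>)"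
  shows "bigOP M
           (\<lambda>n \<omega>. SUP x\<in>{0..1}. ereal \<bar>Ftilde_inv F (\<lambda>i. G (\<xi> i \<omega>))
              (c / real n * dnr M \<xi> (hermite_rank M G (\<xi> 1)) n) \<tau> n x - x\<bar>)
           (\<lambda>n. c / real n * dnr M \<xi> (hermite_rank M G (\<xi> 1)) n)
       \<and> bigOP M
           (\<lambda>n \<omega>. SUP x\<in>{0..1}. ereal ((min x (1 - x)) powr (- lam) *
              \<bar>Ftilde_inv F (\<lambda>i. G (\<xi> i \<omega>))
              (c / real n * dnr M \<xi> (hermite_rank M G (\<xi> 1)) n) \<tau> n x - x\<bar>))
           (\<lambda>n. real n powr lam * (c / real n * dnr M \<xi> (hermite_rank M G (\<xi> 1)) n))"
proof -
  \<comment> \<open>Beyond the Gaussian setting only H1, H3 and H7 are used.\<close>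
  interpret prob_space M by (rule M)
  define r where "r = hermite_rank M G (\<xi> 1)"
  define d where "d = dnr M \<xi> r"
  define J where "J y = 1 / fact r * Jcoef M G (\<xi> 1) r (gen_inv F y)" for y
  have F01: "0 < F t \<and> F t < 1" for t by (rule cdf_strict_mono_bounds[OF F_def F_mono])
  obtain B where B: "0 \<le> B" "\<And>t. f t \<le> B"
    using bounded_of_weighted_bounded[OF H3 _ F_mono F01 f_nonneg] lam by auto
  have "1 \<le> r" using LeastI_ex[OF rank_ex] by (simp add: r_def hermite_rank_def)
  have "\<bar>Jcoef M G (\<xi> 1) r z\<bar> \<le> expectation (\<lambda>\<omega>. \<bar>hermite r (\<xi> 1 \<omega>)\<bar>)" for z
    using stationary_gaussian_std_normal[OF meas gauss stat mean0 var1 order_refl]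
    by (intro abs_Jcoef_le integrable_hermite_std_normal measurable_compose[OF meas G])
  then have J_bound: "\<bar>J y\<bar> \<le> expectation (\<lambda>\<omega>. \<bar>hermite r (\<xi> 1 \<omega>)\<bar>) / fact r" for y
    by (simp add: J_def abs_mult divide_right_mono)
  have d1: "eventually (\<lambda>n. 1 \<le> d n) sequentially"
    using eventually_one_le_of_smallo_powr[OF H7[folded r_def] lam(1)] lam
    unfolding d_def dnr_def by simp
  then have "eventually (\<lambda>n. 0 < d n) sequentially" by eventually_elim simp
  then have OP_sum: "bigOP M (\<lambda>n \<omega>. ereal \<bar>\<Sum>j=1..n. hermite r (\<xi> j \<omega>)\<bar>) d"
    unfolding d_def using \<open>1 \<le> r\<close> by (intro bigOP_hermite_partial_sums meas gauss stat mean0 var1)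
  have OP_err: "bigOP M (\<lambda>n \<omega>. uniform_reduction_error lam (d n) n (\<lambda>j. F (G (\<xi> j \<omega>))) J
      (\<lambda>j. hermite r (\<xi> j \<omega>))) (\<lambda>n. real n powr - \<theta>)"
    using H1 unfolding uniform_reduction_error_def J_def d_def r_def .
  note bigOP_Ftilde_inv_deviation[OF strict_mono_mono[OF F_mono] F01
      cdf_Lipschitz_of_density_bound[OF F_def f_dens B(2) B(1)] B(1) c _ _ _ J_bound d1 OP_err OP_sum]
  then show ?thesis using lam theta unfolding d_def r_def by simp
qed

end
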